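(* Let $n\ge5$ be odd and let $\mathcal{S}_n$ be the regular $n$-gon state space. Then the maximum of $\bar P(\mathsf{M}^{(1)},\mathsf{M}^{(2)})$ over all pairs of compatible dichotomic measurements $\mathsf{M}^{(1)},\mathsf{M}^{(2)}$ on $\mathcal{S}_n$ equals $$\frac12\Big(1+\frac{1+\sec(\pi/n)}{4}\Big),$$ which is strictly larger than $\frac34$. In particular, there exist compatible dichotomic measurements on $\mathcal{S}_n$ with $\bar P(\mathsf{M}^{(1)},\mathsf{M}^{(2)})>\frac34$.
   Context: The regular $n$-gon state space $\mathcal{S}_n\subset\mathbb{R}^3$ is the convex hull of $s_j=(r_n\cos(2j\pi/n),\,r_n\sin(2j\pi/n),\,1)^T$, $j=1,\ldots,n$, with $r_n=\sqrt{\sec(\pi/n)}$. Effects are linear functionals $e$ on $\mathbb{R}^3$ with $0\le e\le1$ on $\mathcal{S}_n$; unit effect $u=(0,0,1)$; $\|f\|=\max_{s\in\mathcal{S}_n}|f(s)|$. A dichotomic measurement is a pair of effects $\mathsf{M}_+,\mathsf{M}_-$ with $\mathsf{M}_++\mathsf{M}_-=u$. Two dichotomic measurements are compatible if there exist effects $\mathsf{J}_{x,y}$, $x,y\in\{+,-\}$, with $\sum_y\mathsf{J}_{x,y}=\mathsf{M}^{(1)}_x$ and $\sum_x\mathsf{J}_{x,y}=\mathsf{M}^{(2)}_y$. $\bar P(\mathsf{M}^{(1)},\mathsf{M}^{(2)})=\frac18\sum_{x,y\in\{+,-\}}\|\mathsf{M}^{(1)}_x+\mathsf{M}^{(2)}_y\|$.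 *)

theory Defs
  imports "HOL-Analysis.Analysis"
begin

text \<open>Regular n-gon state space in R^3. Linear functionals on R^3 are represented
  by vectors f, acting as f(s) = f \<bullet> s.\<close>

definition ngon_r :: "nat \<Rightarrow> real" where
  "ngon_r n = sqrt (1 / cos (pi / real n))"

definition ngon_vertex :: "nat \<Rightarrow> nat \<Rightarrow> real^3" where
  "ngon_vertex n j = vector [ngon_r n * cos (2 * real j * pi / real n),
                             ngon_r n * sin (2 * real j * pi / real n), 1]"

definition ngon_states :: "nat \<Rightarrow> (real^3) set" where
  "ngon_states n = convex hull (ngon_vertex n ` {1..n})"

definition unit_effect :: "real^3" where
  "unit_effect = vector [0, 0, 1]"

definition is_effect :: "nat \<Rightarrow> real^3 \<Rightarrow> bool" where
  "is_effect n e \<longleftrightarrow> (\<forall>s\<in>ngon_states n. 0 \<le> e \<bullet> s \<and> e \<bullet> s \<le> 1)"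

definition fnorm :: "nat \<Rightarrow> real^3 \<Rightarrow> real" where
  "fnorm n f = Sup ((\<lambda>s. \<bar>f \<bullet> s\<bar>) ` ngon_states n)"

text \<open>Dichotomic measurement: outcomes indexed by bool (True = +, False = -).\<close>
definition dichotomic :: "nat \<Rightarrow> (bool \<Rightarrow> real^3) \<Rightarrow> bool" where
  "dichotomic n M \<longleftrightarrow> is_effect n (M True) \<and> is_effect n (M False)
                        \<and> M True + M False = unit_effect"

definition compatible :: "nat \<Rightarrow> (bool \<Rightarrow> real^3) \<Rightarrow> (bool \<Rightarrow> real^3) \<Rightarrow> bool" where
  "compatible n M1 M2 \<longleftrightarrow> (\<exists>J :: bool \<Rightarrow> bool \<Rightarrow> real^3.
      (\<forall>x y. is_effect n (J x y)) \<and>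
      (\<forall>x. J x True + J x False = M1 x) \<and>
      (\<forall>y. J True y + J False y = M2 y))"

definition Pbar :: "nat \<Rightarrow> (bool \<Rightarrow> real^3) \<Rightarrow> (bool \<Rightarrow> real^3) \<Rightarrow> real" where
  "Pbar n M1 M2 = (1/8) * (\<Sum>x\<in>UNIV. \<Sum>y\<in>UNIV. fnorm n (M1 x + M2 y))"

end

(*
  Write c = cos (pi / n).  A joint observable of two dichotomic measurements consists of four
  effects A, B, C, D summing to the unit effect u, and the four sums M1 x + M2 y are u + A - B,
  u - A + B, u + C - D and u - C + D.  Since all of them are nonnegative, the norm of u + a plus
  the norm of u - a is 2 plus the oscillation of a over the vertices.  An effect is nonnegative at
  the vertex closest to the direction opposite to its linear part, which bounds all of its vertex
  values by (1 + 1/c) times its constant term; as the constant terms of A, B, C, D add up to 1,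
  the four norms sum to at most 4 + (1 + 1/c), i.e. Pbar is at most (5 + 1/c) / 8.  For odd n the
  bound is attained by a joint observable assembled from effects that vanish on an edge and
  take the value 1 at the opposite vertex.
*)
theory Submission
  imports Defs
begin

lemma inner_vector_3: "(g::real^3) \<bullet> vector [x, y, z] = g$1 * x + g$2 * y + g$3 * z"
  by (simp add: inner_vec_def sum_3)

lemma inner_ngon_vertex:
  "g \<bullet> ngon_vertex n k
     = ngon_r n * (g$1 * cos (2 * real k * pi / real n) + g$2 * sin (2 * real k * pi / real n)) + g$3"
  unfolding ngon_vertex_def inner_vector_3 by (simp add: algebra_simps)

lemma inner_unit_effect_ngon_vertex [simp]: "unit_effect \<bullet> ngon_vertex n k = 1"
  unfolding unit_effect_def inner_ngon_vertex by simp

lemma convex_hull_inner_le: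
  fixes g :: "'a::real_inner"
  assumes "\<And>v. v \<in> S \<Longrightarrow> g \<bullet> v \<le> M" and "x \<in> convex hull S"
  shows "g \<bullet> x \<le> M"
proof -
  have "convex hull S \<subseteq> {x. g \<bullet> x \<le> M}"
    using assms(1) by (intro hull_minimal) (auto simp: convex_halfspace_le)
  with assms(2) show ?thesis by blast
qed

lemma ngon_vertex_in_states: "k \<in> {1..n} \<Longrightarrow> ngon_vertex n k \<in> ngon_states n"
  unfolding ngon_states_def by (rule hull_inc) simp

lemma ngon_states_inner_le:
  assumes "\<And>k. k \<in> {1..n} \<Longrightarrow> g \<bullet> ngon_vertex n k \<le> M" and "s \<in> ngon_states n"
  shows "g \<bullet> s \<le> M"
  using assms(2) unfolding ngon_states_def by (rule convex_hull_inner_le[rotated]) (use assms(1) in auto)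

lemma ngon_states_abs_inner_le:
  assumes "\<And>k. k \<in> {1..n} \<Longrightarrow> \<bar>g \<bullet> ngon_vertex n k\<bar> \<le> M" and "s \<in> ngon_states n"
  shows "\<bar>g \<bullet> s\<bar> \<le> M"
proof -
  have "g \<bullet> s \<le> M" "(- g) \<bullet> s \<le> M"
    using assms by (metis ngon_states_inner_le abs_le_iff inner_minus_left)+
  then show ?thesis by simp
qed

lemma is_effect_iff_vertices:
  "is_effect n e \<longleftrightarrow> (\<forall>k\<in>{1..n}. 0 \<le> e \<bullet> ngon_vertex n k \<and> e \<bullet> ngon_vertex n k \<le> 1)"
proof
  show "is_effect n e \<Longrightarrow> \<forall>k\<in>{1..n}. 0 \<le> e \<bullet> ngon_vertex n k \<and> e \<bullet> ngon_vertex n k \<le> 1"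
    unfolding is_effect_def using ngon_vertex_in_states by blast
next
  assume e: "\<forall>k\<in>{1..n}. 0 \<le> e \<bullet> ngon_vertex n k \<and> e \<bullet> ngon_vertex n k \<le> 1"
  have "(- e) \<bullet> s \<le> 0" "e \<bullet> s \<le> 1" if "s \<in> ngon_states n" for s
    by (rule ngon_states_inner_le[OF _ that], use e in auto)+
  then show "is_effect n e" unfolding is_effect_def by simp
qed

lemma is_effect_scaleR:
  "is_effect n e \<Longrightarrow> 0 \<le> w \<Longrightarrow> w \<le> 1 \<Longrightarrow> is_effect n (w *\<^sub>R e)"
  unfolding is_effect_def by (simp add: mult_le_one)

lemma is_effect_add_of_sum_unit:
  assumes "is_effect n X" "is_effect n Y" "is_effect n Z" "is_effect n W"
    and "X + Y + Z + W = unit_effect"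
  shows "is_effect n (X + Y)"
  unfolding is_effect_iff_vertices
proof
  fix k assume k: "k \<in> {1..n}"
  let ?v = "ngon_vertex n k"
  have "X \<bullet> ?v + Y \<bullet> ?v + Z \<bullet> ?v + W \<bullet> ?v = 1"
    using arg_cong[OF assms(5), of "\<lambda>e. e \<bullet> ?v"] by (simp add: inner_add_left)
  moreover have "0 \<le> X \<bullet> ?v" "0 \<le> Y \<bullet> ?v" "0 \<le> Z \<bullet> ?v" "0 \<le> W \<bullet> ?v"
    using assms(1-4) k unfolding is_effect_iff_vertices by blast+
  ultimately show "0 \<le> (X + Y) \<bullet> ?v \<and> (X + Y) \<bullet> ?v \<le> 1"
    by (simp add: inner_add_left)
qed

lemma fnorm_le:
  assumes "n \<ge> 1" and "\<And>k. k \<in> {1..n} \<Longrightarrow> \<bar>f \<bullet> ngon_vertex n k\<bar> \<le> M"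
  shows "fnorm n f \<le> M"
  unfolding fnorm_def
proof (rule cSUP_least)
  show "ngon_states n \<noteq> {}" using ngon_vertex_in_states[of n n] assms(1) by auto
qed (use assms(2) ngon_states_abs_inner_le in blast)

lemma abs_inner_vertex_le_fnorm:
  assumes "k \<in> {1..n}"
  shows "\<bar>f \<bullet> ngon_vertex n k\<bar> \<le> fnorm n f"
  unfolding fnorm_def
proof (rule cSUP_upper)
  show "ngon_vertex n k \<in> ngon_states n" using assms by (rule ngon_vertex_in_states)
  have "\<bar>f \<bullet> ngon_vertex n j\<bar> \<le> (\<Sum>i\<in>{1..n}. \<bar>f \<bullet> ngon_vertex n i\<bar>)" if "j \<in> {1..n}" for j
    using that by (intro member_le_sum) auto
  then show "bdd_above ((\<lambda>s. \<bar>f \<bullet> s\<bar>) ` ngon_states n)"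
    by (metis (no_types, lifting) bdd_aboveI2 ngon_states_abs_inner_le)
qed

lemma Pbar_bool:
  "Pbar n M1 M2 = (fnorm n (M1 True + M2 True) + fnorm n (M1 True + M2 False)
                   + fnorm n (M1 False + M2 True) + fnorm n (M1 False + M2 False)) / 8"
  unfolding Pbar_def by (simp add: UNIV_bool)

lemma marginals_compatible:
  assumes "\<And>x y. is_effect n (J x y)"
    and "J True True + J True False + J False True + J False False = unit_effect"
  shows "dichotomic n (\<lambda>x. J x True + J x False) \<and> dichotomic n (\<lambda>y. J True y + J False y)
         \<and> compatible n (\<lambda>x. J x True + J x False) (\<lambda>y. J True y + J False y)"
proof -
  have "is_effect n (J True True + J True False)"
    by (rule is_effect_add_of_sum_unit[of n _ _ "J False True" "J False False"]) (use assms in auto)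
  moreover have "is_effect n (J False True + J False False)"
    by (rule is_effect_add_of_sum_unit[of n _ _ "J True True" "J True False"])
      (use assms in \<open>auto simp: algebra_simps\<close>)
  moreover have "is_effect n (J True True + J False True)"
    by (rule is_effect_add_of_sum_unit[of n _ _ "J True False" "J False False"])
      (use assms in \<open>auto simp: algebra_simps\<close>)
  moreover have "is_effect n (J True False + J False False)"
    by (rule is_effect_add_of_sum_unit[of n _ _ "J True True" "J False True"])
      (use assms in \<open>auto simp: algebra_simps\<close>)
  moreover have "J True True + J True False + (J False True + J False False) = unit_effect"
    "J True True + J False True + (J True False + J False False) = unit_effect"
    using assms(2) by (simp_all add: algebra_simps)
  ultimately show ?thesis
    unfolding dichotomic_def compatible_def using assms(1) by (intro conjI exI[of _ J]) simp_all
qed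

lemma cos_pi_div_ge_half: "n \<ge> 3 \<Longrightarrow> 1/2 \<le> cos (pi / real n)"
proof -
  assume "n \<ge> 3"
  then have "pi / real n \<le> pi / 3" by (intro divide_left_mono) auto
  then have "cos (pi / 3) \<le> cos (pi / real n)" by (intro cos_monotone_0_pi_le) auto
  then show ?thesis by (simp add: cos_60)
qed

lemma cos_pi_div_pos: "n \<ge> 3 \<Longrightarrow> 0 < cos (pi / real n)"
  using cos_pi_div_ge_half by fastforce

lemma cos_pi_div_lt_1: "n \<ge> 1 \<Longrightarrow> cos (pi / real n) < 1"
proof -
  assume "n \<ge> 1"
  then have "cos (pi / real n) < cos 0"
    by (intro cos_monotone_0_pi) (auto simp: divide_le_eq)
  then show ?thesis by simp
qed

lemma ngon_r_pos: "n \<ge> 3 \<Longrightarrow> 0 < ngon_r n"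
  unfolding ngon_r_def using cos_pi_div_pos by simp

lemma cos_le_cos_pi_div:
  fixes n :: nat
  assumes "n \<ge> 1" "pi / n \<le> x" "x \<le> 2 * pi - pi / n"
  shows "cos x \<le> cos (pi / n)"
proof (cases "x \<le> pi")
  case True
  then show ?thesis using assms by (intro cos_monotone_0_pi_le) auto
next
  case False
  have "cos x = cos (2 * pi - x)" by simp
  also have "\<dots> \<le> cos (pi / n)" using assms False by (intro cos_monotone_0_pi_le) auto
  finally show ?thesis .
qed

lemma cos_odd_multiple_le:
  fixes i :: int and n :: nat
  assumes "n \<ge> 1"
  shows "cos ((2 * of_int i + 1) * pi / n) \<le> cos (pi / n)"
proof -
  define r where "r = (2 * i + 1) mod (2 * int n)"
  define q where "q = (2 * i + 1) div (2 * int n)"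
  have decomp: "2 * i + 1 = 2 * int n * q + r" unfolding r_def q_def by simp
  then have "odd r" by (metis even_add even_mult_iff odd_one even_numeral)
  moreover have "0 \<le> r" "r < 2 * int n" unfolding r_def using assms by auto
  ultimately have r: "1 \<le> r" "r \<le> 2 * int n - 1" by (auto simp: le_less odd_pos)
  have "(2 * of_int i + 1) * pi / n = real_of_int r * pi / n + 2 * pi * real_of_int q"
    using arg_cong[OF decomp, of real_of_int] assms by (simp add: field_simps)
  then have "cos ((2 * of_int i + 1) * pi / n) = cos (real_of_int r * pi / n)"
    by (simp add: cos_add)
  also have "\<dots> \<le> cos (pi / n)"
  proof (rule cos_le_cos_pi_div[OF assms])
    show "pi / real n \<le> real_of_int r * pi / real n"
      using r by (simp add: divide_right_mono)
    have "real_of_int r * pi / real n \<le> (2 * real n - 1) * pi / real n"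
      using r by (intro divide_right_mono mult_right_mono) auto
    also have "\<dots> = 2 * pi - pi / n" using assms by (simp add: field_simps)
    finally show "real_of_int r * pi / real n \<le> 2 * pi - pi / real n" .
  qed
  finally show ?thesis .
qed

lemma exists_ngon_angle_near:
  fixes n :: nat
  assumes "n \<ge> 1" "0 \<le> \<phi>" "\<phi> < 2 * pi"
  shows "\<exists>k\<in>{1..n}. cos (pi / n) \<le> cos (2 * real k * pi / n - \<phi>)"
proof -
  define x where "x = real n * \<phi> / (2 * pi)"
  define k0 where "k0 = \<lfloor>x + 1/2\<rfloor>"
  have "\<bar>real_of_int k0 - x\<bar> \<le> 1/2" unfolding k0_def by linarith
  moreover have "2 * real_of_int k0 * pi / n - \<phi> = 2 * pi * (real_of_int k0 - x) / n"
    using assms(1) unfolding x_def by (simp add: field_simps)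
  ultimately have "\<bar>2 * real_of_int k0 * pi / n - \<phi>\<bar> \<le> pi / n"
    using assms(1) by (simp add: abs_mult divide_right_mono)
  then have "cos (pi / n) \<le> cos \<bar>2 * real_of_int k0 * pi / n - \<phi>\<bar>"
    using assms(1) by (intro cos_monotone_0_pi_le) (auto simp: field_simps)
  moreover have "x < real n" using assms by (simp add: x_def field_simps)
  then have k0_range: "0 \<le> k0" "k0 \<le> int n"
    using assms(2) unfolding k0_def x_def by (simp_all, linarith)
  moreover define k where "k = (if k0 = 0 then n else nat k0)"
  moreover have "cos (2 * real k * pi / n - \<phi>) = cos (2 * real_of_int k0 * pi / n - \<phi>)"
    using assms(1) k0_range by (auto simp: k_def cos_diff)
  ultimately show ?thesis
    using k0_range assms(1) by (intro bexI[of _ k]) (auto simp: k_def)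
qed

lemma cos_sin_combination_le: "a * cos t + b * sin t \<le> sqrt (a\<^sup>2 + b\<^sup>2)"
proof -
  have "(a * cos t + b * sin t)\<^sup>2 + (a * sin t - b * cos t)\<^sup>2 = (a\<^sup>2 + b\<^sup>2) * ((sin t)\<^sup>2 + (cos t)\<^sup>2)"
    by algebra
  then have "(a * cos t + b * sin t)\<^sup>2 \<le> a\<^sup>2 + b\<^sup>2"
    by (metis le_add_same_cancel1 mult.right_neutral sin_cos_squared_add zero_le_power2)
  then show ?thesis using real_le_rsqrt by blast
qed

lemma exists_ngon_vertex_direction_le:
  fixes n :: nat
  assumes "n \<ge> 1"
  shows "\<exists>k\<in>{1..n}. a * cos (2 * real k * pi / n) + b * sin (2 * real k * pi / n)
                       \<le> - sqrt (a\<^sup>2 + b\<^sup>2) * cos (pi / n)"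
proof (cases "a\<^sup>2 + b\<^sup>2 = 0")
  case True
  then show ?thesis using assms by (intro bexI[of _ 1]) (auto simp: sum_power2_eq_zero_iff)
next
  case False
  define \<rho> where "\<rho> = sqrt (a\<^sup>2 + b\<^sup>2)"
  have "\<rho> > 0" unfolding \<rho>_def using False by (simp add: add_nonneg_nonneg order_le_neq_trans)
  have "(- a / \<rho>)\<^sup>2 + (- b / \<rho>)\<^sup>2 = 1"
    using False unfolding \<rho>_def by (simp add: power_divide add_divide_distrib[symmetric])
  then obtain \<phi> where \<phi>: "0 \<le> \<phi>" "\<phi> < 2 * pi" "- a / \<rho> = cos \<phi>" "- b / \<rho> = sin \<phi>"
    by (rule sincos_total_2pi)
  have "a = - \<rho> * cos \<phi>" "b = - \<rho> * sin \<phi>"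
    using \<phi>(3,4) \<open>\<rho> > 0\<close> by (simp_all add: field_simps)
  then have polar: "a * cos t + b * sin t = - \<rho> * cos (t - \<phi>)" for t
    by (simp add: cos_diff algebra_simps)
  obtain k where "k \<in> {1..n}" "cos (pi / n) \<le> cos (2 * real k * pi / n - \<phi>)"
    using exists_ngon_angle_near[OF assms \<phi>(1,2)] by blast
  then show ?thesis
    using \<open>\<rho> > 0\<close> unfolding polar \<rho>_def[symmetric] by (intro bexI[of _ k]) auto
qed

lemma inner_ngon_vertex_le_of_nonneg:
  assumes "n \<ge> 3" and nonneg: "\<forall>j\<in>{1..n}. 0 \<le> g \<bullet> ngon_vertex n j" and "k \<in> {1..n}"
  shows "g \<bullet> ngon_vertex n k \<le> (1 + 1 / cos (pi / real n)) * g$3"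
proof -
  define c where "c = cos (pi / real n)"
  define r where "r = ngon_r n"
  define \<rho> where "\<rho> = sqrt ((g$1)\<^sup>2 + (g$2)\<^sup>2)"
  define P where "P j = g$1 * cos (2 * real j * pi / real n) + g$2 * sin (2 * real j * pi / real n)" for j
  have "0 < c" "0 < r" unfolding c_def r_def using assms(1) cos_pi_div_pos ngon_r_pos by auto
  have val: "g \<bullet> ngon_vertex n j = r * P j + g$3" for j
    unfolding inner_ngon_vertex P_def r_def ..
  obtain j where "j \<in> {1..n}" "P j \<le> - \<rho> * c"
    using exists_ngon_vertex_direction_le[of n "g$1" "g$2"] assms(1) unfolding P_def \<rho>_def c_def by auto
  moreover from this have "0 \<le> r * P j + g$3" using nonneg val by metis
  ultimately have "r * (\<rho> * c) \<le> g$3"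
    using mult_left_mono[of "P j" "- \<rho> * c" r] \<open>0 < r\<close> by simp
  then have "r * \<rho> \<le> g$3 / c" using \<open>0 < c\<close> by (simp add: field_simps)
  moreover have "P k \<le> \<rho>" unfolding P_def \<rho>_def by (rule cos_sin_combination_le)
  then have "r * P k \<le> r * \<rho>" using \<open>0 < r\<close> by (simp add: mult_left_mono)
  ultimately have "r * P k \<le> g$3 / c" by linarith
  then show ?thesis unfolding val c_def by (simp add: algebra_simps)
qed

lemma fnorm_unit_add_diff_le:
  assumes "n \<ge> 3" and A: "is_effect n A" and B: "is_effect n B"
  shows "fnorm n (unit_effect + A - B) + fnorm n (unit_effect - A + B)
           \<le> 2 + (1 + 1 / cos (pi / real n)) * (A$3 + B$3)"
proof -
  define v where "v = ngon_vertex n"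
  define a where "a k = A \<bullet> v k - B \<bullet> v k" for k
  define K where "K = (1 + 1 / cos (pi / real n)) * (A$3 + B$3)"
  have AB: "0 \<le> A \<bullet> v k" "A \<bullet> v k \<le> 1" "0 \<le> B \<bullet> v k" "B \<bullet> v k \<le> 1" if "k \<in> {1..n}" for k
    using A B that unfolding is_effect_iff_vertices v_def by auto
  have top: "A \<bullet> v k + B \<bullet> v j \<le> K" if "k \<in> {1..n}" "j \<in> {1..n}" for k j
    using inner_ngon_vertex_le_of_nonneg[OF assms(1) _ that(1), of A]
      inner_ngon_vertex_le_of_nonneg[OF assms(1) _ that(2), of B] AB
    unfolding K_def v_def by (simp add: distrib_left)
  have fin: "finite (a ` {1..n})" "a ` {1..n} \<noteq> {}" using assms(1) by auto
  obtain i where i: "i \<in> {1..n}" "a i = Max (a ` {1..n})"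
    using Max_in[OF fin] by (metis imageE)
  have a_le: "a k \<le> a i" if "k \<in> {1..n}" for k
    unfolding i(2) using that by (intro Max_ge[OF fin(1)] imageI)
  have val: "(unit_effect + A - B) \<bullet> v k = 1 + a k" "(unit_effect - A + B) \<bullet> v k = 1 - a k" for k
    unfolding a_def v_def by (simp_all add: inner_diff_left inner_add_left)
  have "fnorm n (unit_effect + A - B) \<le> 1 + a i"
  proof (rule fnorm_le)
    fix k assume k: "k \<in> {1..n}"
    have "0 \<le> 1 + a k" using AB[OF k] unfolding a_def by linarith
    then show "\<bar>(unit_effect + A - B) \<bullet> ngon_vertex n k\<bar> \<le> 1 + a i"
      using a_le[OF k] val(1) unfolding v_def by simp
  qed (use assms(1) in simp)
  moreover have "fnorm n (unit_effect - A + B) \<le> 1 - a i + K"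
  proof (rule fnorm_le)
    fix k assume k: "k \<in> {1..n}"
    have "0 \<le> 1 - a k" "a i - a k \<le> K"
      using AB[OF k] AB[OF i(1)] top[OF i(1) k] unfolding a_def by linarith+
    then show "\<bar>(unit_effect - A + B) \<bullet> ngon_vertex n k\<bar> \<le> 1 - a i + K"
      using val(2) unfolding v_def by simp
  qed (use assms(1) in simp)
  ultimately show ?thesis unfolding K_def by linarith
qed

lemma Pbar_le:
  assumes "n \<ge> 3" and "dichotomic n M1" and "compatible n M1 M2"
  shows "Pbar n M1 M2 \<le> (5 + 1 / cos (pi / real n)) / 8"
proof -
  obtain J where J: "\<And>x y. is_effect n (J x y)" "\<And>x. J x True + J x False = M1 x"
      "\<And>y. J True y + J False y = M2 y"
    using assms(3) unfolding compatible_def by blast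
  define A B C D where "A = J True True" and "B = J False False" and "C = J True False"
    and "D = J False True"
  have unit: "unit_effect = A + B + C + D"
    using assms(2) J(2)[of True] J(2)[of False] unfolding dichotomic_def A_def B_def C_def D_def
    by (simp add: algebra_simps)
  have "is_effect n A" "is_effect n B" "is_effect n C" "is_effect n D"
    unfolding A_def B_def C_def D_def by (fact J(1))+
  then have "fnorm n (unit_effect + A - B) + fnorm n (unit_effect - A + B)
      \<le> 2 + (1 + 1 / cos (pi / real n)) * (A$3 + B$3)"
    "fnorm n (unit_effect + C - D) + fnorm n (unit_effect - C + D)
      \<le> 2 + (1 + 1 / cos (pi / real n)) * (C$3 + D$3)"
    by (simp_all add: fnorm_unit_add_diff_le[OF assms(1)])
  moreover have "(1 + 1 / cos (pi / real n)) * (A$3 + B$3) + (1 + 1 / cos (pi / real n)) * (C$3 + D$3)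
      = 1 + 1 / cos (pi / real n)"
    using arg_cong[OF unit, of "\<lambda>e. e$3"] unfolding distrib_left[symmetric]
    by (simp add: unit_effect_def add.assoc)
  ultimately have "fnorm n (unit_effect + A - B) + fnorm n (unit_effect + C - D)
      + fnorm n (unit_effect - C + D) + fnorm n (unit_effect - A + B) \<le> 5 + 1 / cos (pi / real n)"
    by linarith
  moreover have "M1 True + M2 True = unit_effect + A - B" "M1 False + M2 False = unit_effect - A + B"
    "M1 True + M2 False = unit_effect + C - D" "M1 False + M2 True = unit_effect - C + D"
    unfolding unit J(2,3)[symmetric] A_def B_def C_def D_def by (simp_all add: algebra_simps)
  ultimately show ?thesis unfolding Pbar_bool by (simp add: divide_right_mono)
qed

text \<open>For \<phi> an odd multiple of pi/n, the direction of an edge midpoint, this effect vanishes on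
  that edge and equals 1 at the vertex diametrically opposite to it, which exists when n is odd.\<close>
definition edge_effect :: "nat \<Rightarrow> real \<Rightarrow> real^3" where
  "edge_effect n \<phi> = (1 / (1 + cos (pi / real n))) *\<^sub>R
     vector [- cos \<phi> / ngon_r n, - sin \<phi> / ngon_r n, cos (pi / real n)]"

lemma inner_edge_effect_ngon_vertex:
  assumes "n \<ge> 3"
  shows "edge_effect n \<phi> \<bullet> ngon_vertex n k
           = (cos (pi / real n) - cos (2 * real k * pi / real n - \<phi>)) / (1 + cos (pi / real n))"
proof -
  have "ngon_r n \<noteq> 0" using ngon_r_pos[OF assms] by simp
  then have "vector [- cos \<phi> / ngon_r n, - sin \<phi> / ngon_r n, cos (pi / real n)] \<bullet> ngon_vertex n k
      = cos (pi / real n) - cos (2 * real k * pi / real n - \<phi>)"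
    unfolding inner_ngon_vertex cos_diff by (simp add: field_simps)
  then show ?thesis unfolding edge_effect_def inner_scaleR_left by simp
qed

lemma is_effect_edge_effect:
  fixes i :: int
  assumes "n \<ge> 3"
  shows "is_effect n (edge_effect n ((2 * of_int i + 1) * pi / real n))"
  unfolding is_effect_iff_vertices
proof
  fix k assume "k \<in> {1..n}"
  define x where "x = 2 * real k * pi / real n - (2 * of_int i + 1) * pi / real n"
  have "x = (2 * of_int (int k - i - 1) + 1) * pi / real n"
    using assms unfolding x_def by (simp add: field_simps)
  then have "cos x \<le> cos (pi / real n)"
    using assms by (simp only: cos_odd_multiple_le)
  moreover have "0 < cos (pi / real n)" using cos_pi_div_pos[OF assms] .
  moreover have "0 \<le> 1 + cos x" using cos_ge_minus_one[of x] by linarith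
  ultimately show "0 \<le> edge_effect n ((2 * of_int i + 1) * pi / real n) \<bullet> ngon_vertex n k
      \<and> edge_effect n ((2 * of_int i + 1) * pi / real n) \<bullet> ngon_vertex n k \<le> 1"
    unfolding inner_edge_effect_ngon_vertex[OF assms] x_def[symmetric] by (simp add: field_simps)
qed

lemma edge_effect_partition:
  assumes "n \<ge> 3"
  shows "edge_effect n pi + (1 / (2 * cos (pi / real n))) *\<^sub>R
           (edge_effect n (pi / real n) + edge_effect n (- (pi / real n))) = unit_effect"
proof -
  define c where "c = cos (pi / real n)"
  define r where "r = ngon_r n"
  have "0 < c" unfolding c_def using cos_pi_div_pos[OF assms] .
  have pair: "edge_effect n (pi / real n) + edge_effect n (- (pi / real n))
          = (1 / (1 + c)) *\<^sub>R vector [- 2 * c / r, 0, 2 * c]"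
    unfolding edge_effect_def c_def r_def by (simp add: vec_eq_iff forall_3)
  have opposite: "edge_effect n pi = (1 / (1 + c)) *\<^sub>R vector [1 / r, 0, c]"
    unfolding edge_effect_def c_def r_def by (simp add: vec_eq_iff forall_3)
  have "r \<noteq> 0" unfolding r_def using ngon_r_pos[OF assms] by simp
  have "edge_effect n pi + (1 / (2 * c)) *\<^sub>R
          (edge_effect n (pi / real n) + edge_effect n (- (pi / real n)))
      = (1 / (1 + c)) *\<^sub>R (vector [1 / r, 0, c] + (1 / (2 * c)) *\<^sub>R vector [- 2 * c / r, 0, 2 * c])"
    unfolding pair opposite by (simp only: scaleR_right_distrib scaleR_scaleR mult.commute)
  also have "vector [1 / r, 0, c] + (1 / (2 * c)) *\<^sub>R vector [- 2 * c / r, 0, 2 * c]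
      = (1 + c) *\<^sub>R unit_effect"
    using \<open>0 < c\<close> \<open>r \<noteq> 0\<close> unfolding unit_effect_def by (simp add: vec_eq_iff forall_3)
  finally show ?thesis using \<open>0 < c\<close> unfolding c_def by simp
qed

definition odd_ngon_joint :: "nat \<Rightarrow> bool \<Rightarrow> bool \<Rightarrow> real^3" where
  "odd_ngon_joint n x y =
     (if x then (1/2) *\<^sub>R edge_effect n pi
      else (1 / (2 * cos (pi / real n))) *\<^sub>R edge_effect n (if y then pi / real n else - (pi / real n)))"

lemma odd_ngon_joint_marginals:
  assumes "odd n" and "n \<ge> 3"
  defines "J \<equiv> odd_ngon_joint n"
  shows "dichotomic n (\<lambda>x. J x True + J x False) \<and> dichotomic n (\<lambda>y. J True y + J False y)
         \<and> compatible n (\<lambda>x. J x True + J x False) (\<lambda>y. J True y + J False y)"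
proof (rule marginals_compatible)
  obtain m where m: "n = 2 * m + 1" using assms(1) oddE by blast
  have "pi = (2 * of_int (int m) + 1) * pi / real n" "pi / real n = (2 * of_int 0 + 1) * pi / real n"
    "- (pi / real n) = (2 * of_int (-1) + 1) * pi / real n"
    using assms(2) unfolding m by (simp_all add: field_simps)
  then have "is_effect n (edge_effect n pi)" "is_effect n (edge_effect n (pi / real n))"
    "is_effect n (edge_effect n (- (pi / real n)))"
    using is_effect_edge_effect[OF assms(2)] by metis+
  moreover have "0 \<le> 1 / (2 * cos (pi / real n))" "1 / (2 * cos (pi / real n)) \<le> 1"
    using cos_pi_div_ge_half[OF assms(2)] by (simp_all add: field_simps)
  ultimately show "is_effect n (J x y)" for x y
    unfolding J_def odd_ngon_joint_def by (simp add: is_effect_scaleR)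
  show "J True True + J True False + J False True + J False False = unit_effect"
    using edge_effect_partition[OF assms(2)]
    unfolding J_def odd_ngon_joint_def by (simp add: scaleR_right_distrib algebra_simps)
qed

lemma edge_effect_odd_ngon_vertex_values:
  assumes "n = 2 * m + 1" and "n \<ge> 3"
  shows "edge_effect n pi \<bullet> ngon_vertex n n = 1" "edge_effect n (pi / real n) \<bullet> ngon_vertex n n = 0"
    "edge_effect n (- (pi / real n)) \<bullet> ngon_vertex n n = 0"
    "edge_effect n pi \<bullet> ngon_vertex n m = 0" "edge_effect n (- (pi / real n)) \<bullet> ngon_vertex n m = 1"
    "edge_effect n pi \<bullet> ngon_vertex n (m + 1) = 0" "edge_effect n (pi / real n) \<bullet> ngon_vertex n (m + 1) = 1"
proof -
  have "2 * real n * pi / real n = 2 * pi" "2 * real m * pi / real n = pi - pi / real n"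
    "2 * real (m + 1) * pi / real n = pi + pi / real n"
    using assms by (simp_all add: field_simps)
  moreover have "0 < cos (pi / real n)" using cos_pi_div_pos[OF assms(2)] .
  ultimately show "edge_effect n pi \<bullet> ngon_vertex n n = 1" "edge_effect n (pi / real n) \<bullet> ngon_vertex n n = 0"
    "edge_effect n (- (pi / real n)) \<bullet> ngon_vertex n n = 0"
    "edge_effect n pi \<bullet> ngon_vertex n m = 0" "edge_effect n (- (pi / real n)) \<bullet> ngon_vertex n m = 1"
    "edge_effect n pi \<bullet> ngon_vertex n (m + 1) = 0" "edge_effect n (pi / real n) \<bullet> ngon_vertex n (m + 1) = 1"
    unfolding inner_edge_effect_ngon_vertex[OF assms(2)] by (simp_all add: cos_diff cos_add)
qed

lemma Pbar_odd_ngon_joint_ge: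
  assumes "odd n" and "n \<ge> 3"
  defines "J \<equiv> odd_ngon_joint n"
  shows "(5 + 1 / cos (pi / real n)) / 8 \<le> Pbar n (\<lambda>x. J x True + J x False) (\<lambda>y. J True y + J False y)"
proof -
  obtain m where m: "n = 2 * m + 1" using assms(1) oddE by blast
  define w where "w = 1 / (2 * cos (pi / real n))"
  define A B D where "A = J True True" and "B = J False False" and "D = J False True"
  have JT: "J True y = A" for y unfolding A_def J_def odd_ngon_joint_def by simp
  have unit: "unit_effect = A + A + D + B"
    using edge_effect_partition[OF assms(2)]
    unfolding A_def B_def D_def J_def odd_ngon_joint_def by (simp add: scaleR_right_distrib algebra_simps)
  have "A \<bullet> ngon_vertex n n = 1/2" "B \<bullet> ngon_vertex n n = 0" "D \<bullet> ngon_vertex n n = 0"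
    "A \<bullet> ngon_vertex n m = 0" "B \<bullet> ngon_vertex n m = w"
    "A \<bullet> ngon_vertex n (m + 1) = 0" "D \<bullet> ngon_vertex n (m + 1) = w"
    using edge_effect_odd_ngon_vertex_values[OF m assms(2)]
    unfolding A_def B_def D_def J_def odd_ngon_joint_def w_def by simp_all
  then have vals: "3/2 \<le> (unit_effect + A - B) \<bullet> ngon_vertex n n"
    "3/2 \<le> (unit_effect + A - D) \<bullet> ngon_vertex n n"
    "1 + w \<le> (unit_effect - A + D) \<bullet> ngon_vertex n (m + 1)"
    "1 + w \<le> (unit_effect - A + B) \<bullet> ngon_vertex n m"
    unfolding w_def by (simp_all add: inner_add_left inner_diff_left)
  have sums: "J True True + J True False + (J True True + J False True) = unit_effect + A - B"
    "J True True + J True False + (J True False + J False False) = unit_effect + A - D"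
    "J False True + J False False + (J True True + J False True) = unit_effect - A + D"
    "J False True + J False False + (J True False + J False False) = unit_effect - A + B"
    unfolding unit JT D_def[symmetric] B_def[symmetric] by (simp_all add: algebra_simps)
  have le_fnorm: "f \<bullet> ngon_vertex n k \<le> fnorm n f" if "k \<in> {1..n}" for k f
    using abs_inner_vertex_le_fnorm[OF that, of f] by linarith
  have vertices: "n \<in> {1..n}" "m \<in> {1..n}" "m + 1 \<in> {1..n}" using assms(2) unfolding m by auto
  have "5 + 2 * w \<le> fnorm n (unit_effect + A - B) + fnorm n (unit_effect + A - D)
      + fnorm n (unit_effect - A + D) + fnorm n (unit_effect - A + B)"
    using order_trans[OF vals(1) le_fnorm[OF vertices(1)]] order_trans[OF vals(2) le_fnorm[OF vertices(1)]]
      order_trans[OF vals(3) le_fnorm[OF vertices(3)]] order_trans[OF vals(4) le_fnorm[OF vertices(2)]]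
    by linarith
  then show ?thesis unfolding Pbar_bool sums w_def by (simp add: divide_right_mono)
qed

theorem mainTheorem13:
  fixes n :: nat
  assumes "odd n" and "n \<ge> 5"
  defines "v \<equiv> (1/2) * (1 + (1 + 1 / cos (pi / real n)) / 4)"
  shows "(\<exists>M1 M2. dichotomic n M1 \<and> dichotomic n M2 \<and> compatible n M1 M2 \<and> Pbar n M1 M2 = v)
       \<and> (\<forall>M1 M2. dichotomic n M1 \<and> dichotomic n M2 \<and> compatible n M1 M2 \<longrightarrow> Pbar n M1 M2 \<le> v)
       \<and> v > 3/4
       \<and> (\<exists>M1 M2. dichotomic n M1 \<and> dichotomic n M2 \<and> compatible n M1 M2 \<and> Pbar n M1 M2 > 3/4)"
proof -
  have n: "n \<ge> 3" using assms(2) by simp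
  have v: "v = (5 + 1 / cos (pi / real n)) / 8" unfolding v_def by simp
  define J where "J = odd_ngon_joint n"
  define M1 M2 where "M1 x = J x True + J x False" and "M2 y = J True y + J False y" for x y
  have compat: "dichotomic n M1 \<and> dichotomic n M2 \<and> compatible n M1 M2"
    using odd_ngon_joint_marginals[OF assms(1) n] unfolding M1_def M2_def J_def by simp
  have upper: "\<forall>M1 M2. dichotomic n M1 \<and> dichotomic n M2 \<and> compatible n M1 M2 \<longrightarrow> Pbar n M1 M2 \<le> v"
    using Pbar_le[OF n] unfolding v by blast
  have "v \<le> Pbar n M1 M2"
    using Pbar_odd_ngon_joint_ge[OF assms(1) n] unfolding v M1_def M2_def J_def by simp
  with upper compat have attained: "Pbar n M1 M2 = v" by (meson order_antisym)
  have "1 < 1 / cos (pi / real n)"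
    using cos_pi_div_pos[OF n] cos_pi_div_lt_1[of n] n by simp
  then have "v > 3/4" unfolding v by simp
  with compat attained upper show ?thesis by auto
qed

end
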